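(* Let $A$ be a commutative ring. Then there is a natural bijection of right $\mathrm{GL}_2(A)$-sets $\pi_0(\Gamma(A))\leftrightarrow \mathrm{GE}_2(A)\backslash \mathrm{GL}_2(A)$.
   Context: $\Gamma(A)$ is the graph whose vertices are classes of unimodular rows $(a,b)\in A^2$ modulo multiplication by units, with $\{[u],[v]\}$ an edge when the matrix with rows $u,v$ lies in $\mathrm{GL}_2(A)$; $\mathrm{GL}_2(A)$ acts on the right by matrix multiplication. $E_2(A)$ is the subgroup of $\mathrm{SL}_2(A)$ generated by elementary matrices, and $\mathrm{GE}_2(A)$ is the subgroup of $\mathrm{GL}_2(A)$ generated by $E_2(A)$ and the invertible diagonal matrices. *)

theory Defs
  imports Main
begin

text \<open>Rows in A^2 are pairs; a 2x2 matrix is the pair of its two rows.\<close>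

type_synonym 'a row2 = "'a \<times> 'a"
type_synonym 'a mat2 = "'a row2 \<times> 'a row2"

definition row_mult :: "'a::comm_ring_1 row2 \<Rightarrow> 'a mat2 \<Rightarrow> 'a row2" where
  "row_mult u M = (fst u * fst (fst M) + snd u * fst (snd M),
                   fst u * snd (fst M) + snd u * snd (snd M))"

definition mat_mult :: "'a::comm_ring_1 mat2 \<Rightarrow> 'a mat2 \<Rightarrow> 'a mat2" where
  "mat_mult M N = (row_mult (fst M) N, row_mult (snd M) N)"

definition mat_one :: "'a::comm_ring_1 mat2" where
  "mat_one = ((1, 0), (0, 1))"

definition GL2 :: "'a::comm_ring_1 mat2 set" where
  "GL2 = {M. \<exists>N. mat_mult M N = mat_one \<and> mat_mult N M = mat_one}"

text \<open>Subgroup generated by a set S of invertible matrices that is closed under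
  inverses (as is the case for the generating sets below): it is the submonoid
  of finite products of generators.\<close>
inductive_set gen_by :: "'a::comm_ring_1 mat2 set \<Rightarrow> 'a mat2 set" for S where
  gen_one: "mat_one \<in> gen_by S"
| gen_mult: "s \<in> S \<Longrightarrow> g \<in> gen_by S \<Longrightarrow> mat_mult s g \<in> gen_by S"

definition elementary :: "'a::comm_ring_1 mat2 set" where
  "elementary = {((1, x), (0, 1)) | x. True} \<union> {((1, 0), (x, 1)) | x. True}"

definition invertible_diagonal :: "'a::comm_ring_1 mat2 set" where
  "invertible_diagonal = {((u, 0), (0, v)) | u v. u dvd 1 \<and> v dvd 1}"

definition E2 :: "'a::comm_ring_1 mat2 set" where
  "E2 = gen_by elementary"

definition GE2 :: "'a::comm_ring_1 mat2 set" where
  "GE2 = gen_by (elementary \<union> invertible_diagonal)"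

definition unimodular :: "'a::comm_ring_1 row2 \<Rightarrow> bool" where
  "unimodular u \<longleftrightarrow> (\<exists>x y. fst u * x + snd u * y = 1)"

definition vclass :: "'a::comm_ring_1 row2 \<Rightarrow> 'a row2 set" where
  "vclass u = {(c * fst u, c * snd u) | c. c dvd 1}"

definition Gamma_V :: "'a::comm_ring_1 row2 set set" where
  "Gamma_V = {vclass u | u. unimodular u}"

definition Gamma_adj :: "'a::comm_ring_1 row2 set \<Rightarrow> 'a row2 set \<Rightarrow> bool" where
  "Gamma_adj X Y \<longleftrightarrow> X \<in> Gamma_V \<and> Y \<in> Gamma_V \<and>
     (\<exists>u v. X = vclass u \<and> Y = vclass v \<and> (u, v) \<in> GL2)"

definition component :: "'a::comm_ring_1 row2 set \<Rightarrow> 'a row2 set set" where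
  "component X = {Y \<in> Gamma_V. Gamma_adj\<^sup>*\<^sup>* X Y}"

definition pi0_Gamma :: "'a::comm_ring_1 row2 set set set" where
  "pi0_Gamma = {component X | X. X \<in> Gamma_V}"

definition vact :: "'a::comm_ring_1 row2 set \<Rightarrow> 'a mat2 \<Rightarrow> 'a row2 set" where
  "vact X g = (\<lambda>u. row_mult u g) ` X"

definition cact :: "'a::comm_ring_1 row2 set set \<Rightarrow> 'a mat2 \<Rightarrow> 'a row2 set set" where
  "cact C g = (\<lambda>X. vact X g) ` C"

definition coset_act :: "'a::comm_ring_1 mat2 set \<Rightarrow> 'a mat2 \<Rightarrow> 'a mat2 set" where
  "coset_act K g = (\<lambda>h. mat_mult h g) ` K"

definition GE2_cosets :: "'a::comm_ring_1 mat2 set set" where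
  "GE2_cosets = {coset_act GE2 g | g. g \<in> GL2}"

end

theory Submission
  imports Defs
begin

text \<open>Send an invertible matrix g to the class of its first row. Every vertex of Gamma(A) arises in
  this way, since a unimodular row (a, b) with a x + b y = 1 is the first row of the matrix with
  second row (-y, x). Left multiplication by a generator of GE_2(A) moves the first row along a path
  of length at most two: an upper elementary matrix replaces the first row u by u + x v, and both are
  adjacent to the second row v, while the other generators leave the class of the first row
  unchanged. Conversely, two invertible matrices whose first rows have the same class differ by a
  lower triangular matrix, which lies in GE_2(A), and along an edge [u] -- [v] the matrix with rows
  v, -u lies in GE_2(A) (u, v). Hence the first-row classes of g and h are connected iff
  h \<in> GE_2(A) g, and the component of the first row of g corresponds to the coset GE_2(A) g.\<close>

definition det2 :: "'a::comm_ring_1 mat2 \<Rightarrow> 'a" where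
  "det2 M = fst (fst M) * snd (snd M) - snd (fst M) * fst (snd M)"

lemma row_mult_pairs [simp]:
  "row_mult (a, b) ((e, f), (g, h)) = (a * e + b * g, a * f + b * h)"
  by (simp add: row_mult_def)

lemma mat_mult_pairs [simp]:
  "mat_mult ((a, b), (c, d)) ((e, f), (g, h)) =
     ((a * e + b * g, a * f + b * h), (c * e + d * g, c * f + d * h))"
  by (simp add: mat_mult_def)

lemma det2_pairs [simp]: "det2 ((a, b), (c, d)) = a * d - b * c"
  by (simp add: det2_def)

lemma fst_mat_mult: "fst (mat_mult M N) = row_mult (fst M) N"
  by (simp add: mat_mult_def)

lemma mat_mult_assoc:
  fixes A B C :: "'a::comm_ring_1 mat2"
  shows "mat_mult (mat_mult A B) C = mat_mult A (mat_mult B C)"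
  by (cases A; cases B; cases C) (auto simp: algebra_simps)

lemma mat_mult_one_left [simp]: "mat_mult mat_one M = (M :: 'a::comm_ring_1 mat2)"
  by (cases M) (auto simp: mat_one_def)

lemma mat_mult_one_right [simp]: "mat_mult M mat_one = (M :: 'a::comm_ring_1 mat2)"
  by (cases M) (auto simp: mat_one_def)

lemma det2_mat_mult:
  fixes M N :: "'a::comm_ring_1 mat2"
  shows "det2 (mat_mult M N) = det2 M * det2 N"
  by (cases M; cases N) (auto simp: algebra_simps)

lemma unit_mult: "(a :: 'a::comm_ring_1) dvd 1 \<Longrightarrow> b dvd 1 \<Longrightarrow> a * b dvd 1"
  using mult_dvd_mono[of a 1 b 1] by simp

lemma GL2_iff_det2_unit: "(M :: 'a::comm_ring_1 mat2) \<in> GL2 \<longleftrightarrow> det2 M dvd 1"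
proof
  assume "M \<in> GL2"
  then obtain N where "mat_mult M N = mat_one" unfolding GL2_def by blast
  then have "det2 M * det2 N = 1" using det2_mat_mult[of M N] by (simp add: mat_one_def)
  then show "det2 M dvd 1" by (metis dvd_triv_left)
next
  assume "det2 M dvd 1"
  then obtain i where i: "det2 M * i = 1" by (metis dvdE)
  obtain a b c d where M: "M = ((a, b), (c, d))" by (metis prod.collapse)
  let ?N = "((d * i, - b * i), (- c * i, a * i))"
  have "mat_mult M ?N = ((det2 M * i, 0), (0, det2 M * i))"
       "mat_mult ?N M = ((det2 M * i, 0), (0, det2 M * i))"
    unfolding M by (simp_all add: algebra_simps)
  then show "M \<in> GL2" unfolding GL2_def i mat_one_def by blast
qed

lemma mat_one_GL2: "mat_one \<in> GL2"
  unfolding GL2_def using mat_mult_one_left[of mat_one] by blast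

lemma GL2_mat_mult: "A \<in> GL2 \<Longrightarrow> B \<in> GL2 \<Longrightarrow> mat_mult A B \<in> GL2"
  by (simp add: GL2_iff_det2_unit det2_mat_mult unit_mult)

lemma unimodular_fst_GL2: "g \<in> GL2 \<Longrightarrow> unimodular (fst g)"
proof -
  assume "g \<in> GL2"
  then obtain i where i: "det2 g * i = 1" by (metis GL2_iff_det2_unit dvdE)
  obtain a b c d where g: "g = ((a, b), (c, d))" by (metis prod.collapse)
  have "a * (d * i) + b * (- c * i) = 1" using i unfolding g by (simp add: algebra_simps)
  then show ?thesis unfolding unimodular_def g fst_conv snd_conv by blast
qed

lemma unimodular_imp_fst_GL2: "unimodular u \<Longrightarrow> \<exists>g\<in>GL2. fst g = u"
proof -
  assume "unimodular u"
  then obtain x y where "fst u * x + snd u * y = 1" unfolding unimodular_def by blast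
  then have "(u, (- y, x)) \<in> GL2" by (cases u) (simp add: GL2_iff_det2_unit)
  then show ?thesis by force
qed

lemma gen_by_mat_mult: "a \<in> gen_by S \<Longrightarrow> b \<in> gen_by S \<Longrightarrow> mat_mult a b \<in> gen_by S"
  by (induction a rule: gen_by.induct) (auto simp: mat_mult_assoc intro: gen_by.intros)

lemma gen_by_generator: "s \<in> S \<Longrightarrow> s \<in> gen_by S"
  using gen_by.gen_mult[OF _ gen_by.gen_one, of s S] by simp

lemma gen_by_subset_GL2:
  assumes "S \<subseteq> GL2"
  shows "gen_by S \<subseteq> GL2"
proof
  fix e assume "e \<in> gen_by S"
  then show "e \<in> GL2" using assms
    by (induction e rule: gen_by.induct) (auto intro: mat_one_GL2 GL2_mat_mult)
qed

lemma coset_act_iff: "h \<in> coset_act K g \<longleftrightarrow> (\<exists>e\<in>K. h = mat_mult e g)"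
  unfolding coset_act_def by (rule image_iff)

lemma coset_act_gen_by_trans:
  "h \<in> coset_act (gen_by S) k \<Longrightarrow> k \<in> coset_act (gen_by S) g \<Longrightarrow> h \<in> coset_act (gen_by S) g"
  unfolding coset_act_iff by (metis gen_by_mat_mult mat_mult_assoc)

lemma coset_act_coset_act: "coset_act (coset_act K k) g = coset_act K (mat_mult k g)"
  unfolding coset_act_def image_image mat_mult_assoc ..

lemma GE2_subset_GL2: "GE2 \<subseteq> GL2"
  unfolding GE2_def
  by (rule gen_by_subset_GL2)
    (auto simp: elementary_def invertible_diagonal_def GL2_iff_det2_unit unit_mult)

lemma coset_act_GE2_subset_GL2: "g \<in> GL2 \<Longrightarrow> coset_act GE2 g \<subseteq> GL2"
  using GE2_subset_GL2 unfolding coset_act_def by (blast intro: GL2_mat_mult)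

lemma lower_triangular_GE2:
  fixes c t :: "'a::comm_ring_1"
  assumes "c dvd 1" "t dvd 1"
  shows "((c, 0), (d, t)) \<in> GE2"
proof -
  obtain c' where c': "c * c' = 1" using assms(1) by (metis dvdE)
  have "((1, 0), (d * c', 1)) \<in> elementary" unfolding elementary_def by blast
  moreover have "((c, 0), (0, t)) \<in> invertible_diagonal"
    unfolding invertible_diagonal_def using assms by blast
  ultimately have "mat_mult ((1, 0), (d * c', 1)) ((c, 0), (0, t)) \<in> GE2"
    unfolding GE2_def by (blast intro: gen_by_mat_mult gen_by_generator)
  moreover have "mat_mult ((1, 0), (d * c', 1)) ((c, 0), (0, t)) = ((c, 0), (d, t))"
    using c' by (simp add: algebra_simps) (metis mult.assoc mult_1)
  ultimately show ?thesis by simp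
qed

lemma rotation_GE2: "((0, 1), (- 1, 0)) \<in> (GE2 :: 'a::comm_ring_1 mat2 set)"
proof -
  let ?U = "((1, 1), (0, 1)) :: 'a mat2" and ?L = "((1, 0), (- 1, 1)) :: 'a mat2"
  have "?U \<in> GE2" "?L \<in> GE2"
    unfolding GE2_def elementary_def by (blast intro: gen_by_generator)+
  then have "mat_mult ?U (mat_mult ?L ?U) \<in> GE2"
    unfolding GE2_def by (blast intro: gen_by_mat_mult)
  then show ?thesis by simp
qed

lemma vclass_self: "u \<in> vclass u"
  unfolding vclass_def by (rule CollectI, rule exI[of _ 1]) simp

lemma vclass_eq_imp_unit_multiple:
  "vclass u = vclass v \<Longrightarrow> \<exists>c. c dvd 1 \<and> v = (c * fst u, c * snd u)"
  using vclass_self[of v] unfolding vclass_def by auto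

lemma vclass_eq_image: "vclass u = (\<lambda>c. (c * fst u, c * snd u)) ` {c. c dvd 1}"
  unfolding vclass_def by blast

lemma vclass_unit_multiple_subset:
  fixes c :: "'a::comm_ring_1"
  assumes c: "c dvd 1"
  shows "vclass (c * a, c * b) \<subseteq> vclass (a, b)"
proof
  fix x assume "x \<in> vclass (c * a, c * b)"
  then obtain d where d: "d dvd 1" "x = (d * (c * a), d * (c * b))" unfolding vclass_def by auto
  then have "x = ((d * c) * a, (d * c) * b)" "d * c dvd 1" using c by (auto simp: mult.assoc unit_mult)
  then show "x \<in> vclass (a, b)" unfolding vclass_def by force
qed

lemma vclass_unit_multiple:
  fixes c :: "'a::comm_ring_1"
  assumes c: "c dvd 1"
  shows "vclass (c * a, c * b) = vclass (a, b)"
proof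
  obtain c' where c': "c' * c = 1" using c by (metis dvdE mult.commute)
  then have "c' dvd 1" by (metis dvd_triv_left)
  then have "vclass (c' * (c * a), c' * (c * b)) \<subseteq> vclass (c * a, c * b)"
    by (rule vclass_unit_multiple_subset)
  then show "vclass (a, b) \<subseteq> vclass (c * a, c * b)"
    using c' by (simp add: mult.assoc[symmetric])
qed (rule vclass_unit_multiple_subset[OF c])

lemma row_mult_unit_multiple:
  "row_mult (c * fst u, c * snd u) g = (c * fst (row_mult u g), c * snd (row_mult u g))"
  by (simp add: row_mult_def algebra_simps)

lemma vact_vclass: "vact (vclass u) g = vclass (row_mult u g)"
  unfolding vact_def vclass_eq_image image_image row_mult_unit_multiple ..

lemma Gamma_V_eq: "Gamma_V = (\<lambda>g. vclass (fst g)) ` GL2"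
  unfolding Gamma_V_def using unimodular_fst_GL2 unimodular_imp_fst_GL2 by blast

lemma Gamma_adj_rows_GL2: "(u, v) \<in> GL2 \<Longrightarrow> Gamma_adj (vclass u) (vclass v)"
proof -
  assume uv: "(u, v) \<in> GL2"
  moreover have "det2 (v, u) = - det2 (u, v)"
    by (simp add: det2_def algebra_simps)
  ultimately have "(v, u) \<in> GL2" by (simp add: GL2_iff_det2_unit)
  then show ?thesis
    unfolding Gamma_adj_def Gamma_V_eq using uv by (metis fst_conv image_eqI)
qed

lemma first_row_generator_connected:
  assumes g: "g \<in> GL2" and s: "s \<in> elementary \<union> invertible_diagonal"
  shows "Gamma_adj\<^sup>*\<^sup>* (vclass (fst g)) (vclass (fst (mat_mult s g)))"
proof -
  obtain a b c d where g_eq: "g = ((a, b), (c, d))" by (metis prod.collapse)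
  consider (upper) x where "s = ((1, x), (0, 1))" | (lower) x where "s = ((1, 0), (x, 1))"
    | (diagonal) p q where "s = ((p, 0), (0, q))" "p dvd 1"
    using s unfolding elementary_def invertible_diagonal_def by blast
  then show ?thesis
  proof cases
    case (upper x)
    have "det2 ((c, d), (a + x * c, b + x * d)) = - det2 g"
      unfolding g_eq by (simp add: algebra_simps)
    then have "((c, d), (a + x * c, b + x * d)) \<in> GL2"
      using g by (simp add: GL2_iff_det2_unit)
    then have "Gamma_adj (vclass (c, d)) (vclass (a + x * c, b + x * d))"
      by (rule Gamma_adj_rows_GL2)
    moreover have "Gamma_adj (vclass (a, b)) (vclass (c, d))"
      using g unfolding g_eq by (rule Gamma_adj_rows_GL2)
    ultimately show ?thesis
      unfolding g_eq upper by (simp add: converse_rtranclp_into_rtranclp)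
  next
    case (lower x)
    then show ?thesis unfolding g_eq by simp
  next
    case (diagonal p q)
    then show ?thesis unfolding g_eq by (simp add: vclass_unit_multiple)
  qed
qed

lemma first_row_GE2_connected:
  assumes "e \<in> GE2" "g \<in> GL2"
  shows "Gamma_adj\<^sup>*\<^sup>* (vclass (fst g)) (vclass (fst (mat_mult e g)))"
  using assms unfolding GE2_def
proof (induction e rule: gen_by.induct)
  case gen_one
  then show ?case by simp
next
  case (gen_mult s e)
  have "mat_mult e g \<in> GL2"
    using gen_mult GE2_subset_GL2 unfolding GE2_def by (blast intro: GL2_mat_mult)
  then have "Gamma_adj\<^sup>*\<^sup>* (vclass (fst (mat_mult e g))) (vclass (fst (mat_mult s (mat_mult e g))))"
    using gen_mult.hyps(1) by (rule first_row_generator_connected)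
  with gen_mult.IH gen_mult.prems show ?case
    by (simp add: mat_mult_assoc)
qed

lemma same_first_row_class_coset:
  assumes g: "g \<in> GL2" and h: "h \<in> GL2" and same: "vclass (fst g) = vclass (fst h)"
  shows "h \<in> coset_act GE2 g"
proof -
  obtain c where c: "c dvd 1" "fst h = (c * fst (fst g), c * snd (fst g))"
    using vclass_eq_imp_unit_multiple[OF same] by blast
  obtain N where N: "mat_mult g N = mat_one" "mat_mult N g = mat_one"
    using g unfolding GL2_def by blast
  define e where "e = mat_mult h N"
  have e_g: "mat_mult e g = h"
    unfolding e_def mat_mult_assoc N(2) by simp
  have "N \<in> GL2" using N unfolding GL2_def by blast
  with h have "e \<in> GL2" unfolding e_def by (rule GL2_mat_mult)
  then have det_e: "det2 e dvd 1" by (simp add: GL2_iff_det2_unit)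
  have "row_mult (fst g) N = (1, 0)"
    using N(1) unfolding fst_mat_mult[symmetric] by (simp add: mat_one_def)
  then have "fst e = (c, 0)"
    unfolding e_def fst_mat_mult c(2) row_mult_unit_multiple by simp
  then obtain d t where e_eq: "e = ((c, 0), (d, t))" by (metis prod.collapse)
  then have "t dvd 1" using det_e by (simp add: dvd_mult_right)
  then have "e \<in> GE2" unfolding e_eq using c(1) by (rule lower_triangular_GE2[rotated])
  then show ?thesis unfolding coset_act_iff using e_g by blast
qed

lemma connected_first_rows_imp_coset:
  assumes "Gamma_adj\<^sup>*\<^sup>* (vclass (fst g)) Y" and g: "g \<in> GL2"
  shows "h \<in> GL2 \<Longrightarrow> Y = vclass (fst h) \<Longrightarrow> h \<in> coset_act GE2 g"
  using assms(1)
proof (induction arbitrary: h rule: rtranclp_induct)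
  case base
  then show ?case using g same_first_row_class_coset by blast
next
  case (step Y Z)
  then obtain u v where uv: "Y = vclass u" "Z = vclass v" "(u, v) \<in> GL2"
    unfolding Gamma_adj_def by blast
  then have uv_coset: "(u, v) \<in> coset_act GE2 g" using step.IH by simp
  let ?r = "mat_mult ((0, 1), (- 1, 0)) (u, v)"
  have r_coset: "?r \<in> coset_act GE2 (u, v)"
    using rotation_GE2 unfolding coset_act_iff by blast
  then have "?r \<in> GL2" using coset_act_GE2_subset_GL2[OF uv(3)] by blast
  moreover have "fst ?r = v" by (cases u; cases v) simp
  ultimately have "h \<in> coset_act GE2 ?r"
    using same_first_row_class_coset[of ?r h] step.prems uv(2) by simp
  then show ?case
    using r_coset uv_coset unfolding GE2_def by (blast intro: coset_act_gen_by_trans)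
qed

lemma connected_first_rows_iff_coset:
  assumes "g \<in> GL2" "h \<in> GL2"
  shows "Gamma_adj\<^sup>*\<^sup>* (vclass (fst g)) (vclass (fst h)) \<longleftrightarrow> h \<in> coset_act GE2 g"
  using assms connected_first_rows_imp_coset first_row_GE2_connected
  unfolding coset_act_iff by blast

lemma component_first_row:
  assumes "k \<in> GL2"
  shows "component (vclass (fst k)) = (\<lambda>h. vclass (fst h)) ` coset_act GE2 k"
  using assms connected_first_rows_iff_coset coset_act_GE2_subset_GL2
  unfolding component_def Gamma_V_eq by blast

lemma pi0_Gamma_eq: "pi0_Gamma = (\<lambda>k. component (vclass (fst k))) ` GL2"
  unfolding pi0_Gamma_def Gamma_V_eq by blast

lemma cact_component_first_row:
  assumes k: "k \<in> GL2" and g: "g \<in> GL2"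
  shows "cact (component (vclass (fst k))) g = component (vclass (fst (mat_mult k g)))"
proof -
  have "cact (component (vclass (fst k))) g
      = (\<lambda>h. vclass (fst h)) ` coset_act (coset_act GE2 k) g"
    unfolding cact_def component_first_row[OF k] coset_act_def[of "coset_act GE2 k"]
      image_image vact_vclass fst_mat_mult ..
  also have "\<dots> = component (vclass (fst (mat_mult k g)))"
    unfolding coset_act_coset_act component_first_row[OF GL2_mat_mult[OF k g]] ..
  finally show ?thesis .
qed

definition first_row_preimage :: "'a::comm_ring_1 row2 set set \<Rightarrow> 'a mat2 set" where
  "first_row_preimage C = {h \<in> GL2. vclass (fst h) \<in> C}"

lemma first_row_preimage_component:
  assumes "k \<in> GL2"
  shows "first_row_preimage (component (vclass (fst k))) = coset_act GE2 k"
  using assms connected_first_rows_iff_coset coset_act_GE2_subset_GL2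
  unfolding first_row_preimage_def component_def Gamma_V_eq by blast

theorem theorem3p3:
  shows "\<exists>f :: 'a::comm_ring_1 row2 set set \<Rightarrow> 'a mat2 set.
           bij_betw f pi0_Gamma GE2_cosets
         \<and> (\<forall>C\<in>pi0_Gamma. \<forall>g\<in>GL2. cact C g \<in> pi0_Gamma \<and> f (cact C g) = coset_act (f C) g)
         \<and> (\<forall>g\<in>GL2. f (component (vclass (fst g))) = coset_act GE2 g)"
proof (intro exI[of _ first_row_preimage] conjI ballI)
  show "bij_betw first_row_preimage pi0_Gamma GE2_cosets"
  proof (rule bij_betw_imageI)
    show "inj_on first_row_preimage pi0_Gamma"
    proof (rule inj_onI)
      fix C D
      assume "C \<in> pi0_Gamma" "D \<in> pi0_Gamma" "first_row_preimage C = first_row_preimage D"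
      then show "C = D"
        unfolding pi0_Gamma_eq
        by (metis (no_types, lifting) imageE first_row_preimage_component component_first_row)
    qed
    show "first_row_preimage ` pi0_Gamma = GE2_cosets"
      unfolding pi0_Gamma_eq GE2_cosets_def image_image
      by (auto simp: first_row_preimage_component)
  qed
next
  fix C :: "'a row2 set set" and g :: "'a mat2"
  assume "C \<in> pi0_Gamma" and g: "g \<in> GL2"
  then obtain k where k: "k \<in> GL2" and C: "C = component (vclass (fst k))"
    unfolding pi0_Gamma_eq by blast
  show "cact C g \<in> pi0_Gamma"
    unfolding C cact_component_first_row[OF k g] pi0_Gamma_eq
    using GL2_mat_mult[OF k g] by blast
  show "first_row_preimage (cact C g) = coset_act (first_row_preimage C) g"
    unfolding C cact_component_first_row[OF k g] first_row_preimage_component[OF k]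
      first_row_preimage_component[OF GL2_mat_mult[OF k g]] coset_act_coset_act ..
next
  fix g :: "'a mat2"
  assume "g \<in> GL2"
  then show "first_row_preimage (component (vclass (fst g))) = coset_act GE2 g"
    by (rule first_row_preimage_component)
qed

end
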